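(* Let $\lambda,\mu,\nu$ be partitions with at most $3$ parts (written as triples $(\xi_1,\xi_2,\xi_3)$, $\xi_1\ge\xi_2\ge\xi_3\ge0$). Then the Littlewood–Richardson coefficient $c^{\lambda}_{\mu,\nu}$ (the coefficient of $s_\lambda$ in $s_\mu s_\nu$, Schur functions) equals $1$ if and only if $(\lambda,\mu,\nu)$ lies on a facet of the Horn cone $\mathcal{H}_3$, i.e. $|\lambda|=|\mu|+|\nu|$, all eighteen inequalities listed below hold, and at least one of them holds with equality.
   Context: The eighteen inequalities defining $\mathcal{H}_3$ (together with $|\lambda|=|\mu|+|\nu|$, where $|\xi|=\xi_1+\xi_2+\xi_3$) are: (1) $\mu_3\le\mu_2$; (2) $\mu_2\le\mu_1$; (3) $\nu_3\le\nu_2$; (4) $\nu_2\le\nu_1$; (5) $\lambda_3\le\lambda_2$; (6) $\lambda_2\le\lambda_1$; (7) $\lambda_1\le\mu_1+\nu_1$; (8) $\lambda_2\le\mu_1+\nu_2$; (9) $\lambda_2\le\mu_2+\nu_1$; (10) $\lambda_3\le\mu_1+\nu_3$; (11) $\lambda_3\le\mu_2+\nu_2$; (12) $\lambda_3\le\mu_3+\nu_1$; (13) $\lambda_3\ge\mu_3+\nu_3$; (14) $\lambda_2\ge\mu_3+\nu_2$; (15) $\lambda_2\ge\mu_2+\nu_3$; (16) $\lambda_1\ge\mu_3+\nu_1$; (17) $\lambda_1\ge\mu_2+\nu_2$; (18) $\lambda_1\ge\mu_1+\nu_3$. A facet is the set of points of $\mathcal{H}_3$ at which one of these inequalities is an equality.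 *)

theory Defs
  imports Main
begin

text \<open>Partitions with at most three parts are triples (x1,x2,x3) of naturals with
  x1 \<ge> x2 \<ge> x3 (\<ge> 0 automatic). Exponent vectors of monomials in x1,x2,x3 are
  also triples of naturals.\<close>

type_synonym triple = "nat \<times> nat \<times> nat"

definition is_part3 :: "triple \<Rightarrow> bool" where
  "is_part3 p = (case p of (a, b, c) \<Rightarrow> b \<le> a \<and> c \<le> b)"

definition size3 :: "triple \<Rightarrow> nat" where
  "size3 p = (case p of (a, b, c) \<Rightarrow> a + b + c)"

definition part :: "triple \<Rightarrow> nat \<Rightarrow> nat" where
  "part p i = (case p of (a, b, c) \<Rightarrow> if i = 0 then a else if i = 1 then b else if i = 2 then c else 0)"

definition cell :: "triple \<Rightarrow> nat \<Rightarrow> nat \<Rightarrow> bool" where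
  "cell p i j = (i < 3 \<and> j < part p i)"

definition ssyt3 :: "triple \<Rightarrow> (nat \<Rightarrow> nat \<Rightarrow> nat) \<Rightarrow> bool" where
  "ssyt3 p T =
    ((\<forall>i j. cell p i j \<longrightarrow> T i j \<in> {1, 2, 3}) \<and>
     (\<forall>i j. \<not> cell p i j \<longrightarrow> T i j = 0) \<and>
     (\<forall>i j. cell p i (Suc j) \<longrightarrow> T i j \<le> T i (Suc j)) \<and>
     (\<forall>i j. cell p (Suc i) j \<longrightarrow> T i j < T (Suc i) j))"

definition content3 :: "triple \<Rightarrow> (nat \<Rightarrow> nat \<Rightarrow> nat) \<Rightarrow> triple" where
  "content3 p T =
    (card {(i, j). cell p i j \<and> T i j = 1},
     card {(i, j). cell p i j \<and> T i j = 2},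
     card {(i, j). cell p i j \<and> T i j = 3})"

text \<open>Coefficient of the monomial x^al in the Schur polynomial s_p(x1,x2,x3)
  (= sum over SSYT T of shape p of x^content(T)).\<close>
definition schur_coeff :: "triple \<Rightarrow> triple \<Rightarrow> int" where
  "schur_coeff p al = int (card {T. ssyt3 p T \<and> content3 p T = al})"

text \<open>Coefficient of x^al in the product s_mu s_nu (product of polynomials = convolution).\<close>
definition schur_prod_coeff :: "triple \<Rightarrow> triple \<Rightarrow> triple \<Rightarrow> int" where
  "schur_prod_coeff mu nu al =
    (case al of (a1, a2, a3) \<Rightarrow>
      (\<Sum>b1\<le>a1. \<Sum>b2\<le>a2. \<Sum>b3\<le>a3.
         schur_coeff mu (b1, b2, b3) * schur_coeff nu (a1 - b1, a2 - b2, a3 - b3)))"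

definition parts3_of_size :: "nat \<Rightarrow> triple set" where
  "parts3_of_size n = {p. is_part3 p \<and> size3 p = n}"

text \<open>Littlewood--Richardson coefficient c^la_{mu,nu}: the coefficient of s_la in the
  (unique) expansion of s_mu s_nu as a linear combination of Schur polynomials
  (in three variables, which suffices for partitions with at most three parts).\<close>
definition lr_coeff :: "triple \<Rightarrow> triple \<Rightarrow> triple \<Rightarrow> int" where
  "lr_coeff la mu nu =
    (THE c. (\<forall>al. schur_prod_coeff mu nu al =
               (\<Sum>p\<in>parts3_of_size (size3 mu + size3 nu). c p * schur_coeff p al))
          \<and> (\<forall>p. p \<notin> parts3_of_size (size3 mu + size3 nu) \<longrightarrow> c p = 0)) la"

text \<open>The eighteen inequalities (1)-(18) defining H_3, each written as (lhs, rhs)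
  meaning lhs \<le> rhs.\<close>
definition horn3_ineqs :: "triple \<Rightarrow> triple \<Rightarrow> triple \<Rightarrow> (nat \<times> nat) list" where
  "horn3_ineqs la mu nu =
    (case la of (l1, l2, l3) \<Rightarrow> case mu of (m1, m2, m3) \<Rightarrow> case nu of (n1, n2, n3) \<Rightarrow>
     [(m3, m2), (m2, m1), (n3, n2), (n2, n1), (l3, l2), (l2, l1),
      (l1, m1 + n1), (l2, m1 + n2), (l2, m2 + n1),
      (l3, m1 + n3), (l3, m2 + n2), (l3, m3 + n1),
      (m3 + n3, l3), (m3 + n2, l2), (m2 + n3, l2),
      (m3 + n1, l1), (m2 + n2, l1), (m1 + n3, l1)])"

definition in_horn3 :: "triple \<Rightarrow> triple \<Rightarrow> triple \<Rightarrow> bool" where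
  "in_horn3 la mu nu =
    (size3 la = size3 mu + size3 nu \<and> (\<forall>(a, b) \<in> set (horn3_ineqs la mu nu). a \<le> b))"

definition on_horn3_facet :: "triple \<Rightarrow> triple \<Rightarrow> triple \<Rightarrow> bool" where
  "on_horn3_facet la mu nu =
    (in_horn3 la mu nu \<and> (\<exists>(a, b) \<in> set (horn3_ineqs la mu nu). a = b))"

end

theory Submission
  imports Defs
begin

text \<open>Multiplication by the Vandermonde product (X - Y)(X - Z)(Y - Z) is injective on
  series supported in the nonnegative orthant and, by Jacobi's bialternant formula, sends
  s_nu to the alternant a_(nu + rho), rho = (2,1,0). So the expansion
  s_mu s_nu = sum_la c_la s_la turns into s_mu a_(nu + rho) = sum_la c_la a_(la + rho), and
  reading off the coefficient of x^(la + rho) in the dominant chamber gives the Racah-Speiser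
  formula c_la = sum over w in S_3 of sgn(w) K_(mu, la + rho - w(nu + rho)). Kostka numbers of
  shapes with three rows are explicit piecewise linear functions (a tableau is determined by
  three integer parameters), so "this alternating sum equals 1" is a formula of linear
  integer arithmetic, and it is equivalent to the facet condition.\<close>

section \<open>Semistandard tableaux of three-row shapes\<close>

lemma cell_triple_iff:
  "cell (a, b, c) i j \<longleftrightarrow> i = 0 \<and> j < a \<or> i = 1 \<and> j < b \<or> i = 2 \<and> j < c"
  by (auto simp: cell_def part_def)

definition tableau3 :: "nat \<Rightarrow> nat \<Rightarrow> nat \<Rightarrow> nat \<Rightarrow> nat \<Rightarrow> nat \<Rightarrow> nat \<Rightarrow> nat \<Rightarrow> nat" where
  "tableau3 a b c r1 r2 t i j =
    (if i = 0 \<and> j < a then (if j < r1 then 1 else if j < r2 then 2 else 3)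
     else if i = 1 \<and> j < b then (if j < t then 2 else 3)
     else if i = 2 \<and> j < c then 3 else 0)"

lemma ssyt3_tableau3:
  assumes "c \<le> t" "t \<le> r1" "b \<le> r2" "r1 \<le> r2" "r2 \<le> a" "t \<le> b"
  shows "ssyt3 (a, b, c) (tableau3 a b c r1 r2 t)"
  using assms unfolding ssyt3_def by (auto simp: cell_triple_iff tableau3_def)

lemma card_Pair_image: "card (Pair i ` A) = card A"
  by (simp add: card_image inj_on_def)

lemma content3_tableau3:
  assumes "r1 \<le> r2" "r2 \<le> a" "t \<le> b"
  shows "content3 (a, b, c) (tableau3 a b c r1 r2 t) = (r1, r2 - r1 + t, a - r2 + (b - t) + c)"
proof -
  let ?T = "tableau3 a b c r1 r2 t"
  have "{(i, j). cell (a, b, c) i j \<and> ?T i j = 1} = Pair 0 ` {..<r1}"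
    and "{(i, j). cell (a, b, c) i j \<and> ?T i j = 2} = Pair 0 ` {r1..<r2} \<union> Pair 1 ` {..<t}"
    and "{(i, j). cell (a, b, c) i j \<and> ?T i j = 3} =
           Pair 0 ` {r2..<a} \<union> (Pair 1 ` {t..<b} \<union> Pair 2 ` {..<c})"
    using assms by (auto simp: cell_triple_iff tableau3_def split: if_splits)
  moreover have "card (Pair 0 ` {r1..<r2} \<union> Pair (1::nat) ` {..<t}) = r2 - r1 + t"
    by (subst card_Un_disjoint) (auto simp: card_Pair_image)
  moreover have "card (Pair 0 ` {r2..<a} \<union> (Pair 1 ` {t..<b} \<union> Pair (2::nat) ` {..<c})) =
      a - r2 + (b - t) + c"
    by (subst card_Un_disjoint, simp, simp, force, subst card_Un_disjoint) (auto simp: card_Pair_image)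
  ultimately show ?thesis unfolding content3_def by (simp add: card_Pair_image)
qed

lemma ssyt3_row_mono:
  assumes "ssyt3 p T" "j \<le> j'" "cell p i j'"
  shows "T i j \<le> T i j'"
  using assms(2,3)
proof (induction j' rule: dec_induct)
  case (step k)
  then have "T i j \<le> T i k" by (auto simp: cell_def)
  also have "T i k \<le> T i (Suc k)" using assms(1) step.prems unfolding ssyt3_def by blast
  finally show ?case .
qed simp

lemma down_closed_eq_lessThan:
  assumes "finite S" "\<And>i j. j \<in> S \<Longrightarrow> i \<le> j \<Longrightarrow> i \<in> S"
  shows "S = {..<card S}"
proof -
  have "j < card S" if "j \<in> S" for j
  proof -
    have "{..j} \<subseteq> S" using assms(2) that by auto
    then have "card {..j} \<le> card S" using assms(1) card_mono by blast
    then show ?thesis by simp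
  qed
  then show ?thesis by (intro card_subset_eq) auto
qed

lemma mono_le_iff_less_card:
  fixes g :: "nat \<Rightarrow> nat"
  assumes mono: "\<And>j j'. j \<le> j' \<Longrightarrow> j' < n \<Longrightarrow> g j \<le> g j'" and "j < n"
  shows "g j \<le> v \<longleftrightarrow> j < card {j. j < n \<and> g j \<le> v}"
proof -
  let ?S = "{j. j < n \<and> g j \<le> v}"
  have "?S = {..<card ?S}"
    by (rule down_closed_eq_lessThan) (auto intro: order_trans[OF mono])
  then have "j \<in> ?S \<longleftrightarrow> j < card ?S" by blast
  then show ?thesis using \<open>j < n\<close> by simp
qed

lemma ssyt3_row_thresholds:
  assumes T: "ssyt3 (a, b, c) T"
  obtains r1 r2 t where "r1 \<le> r2" "r2 \<le> a" "t \<le> b"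
    "\<And>j. j < a \<Longrightarrow> T 0 j \<le> 1 \<longleftrightarrow> j < r1" "\<And>j. j < a \<Longrightarrow> T 0 j \<le> 2 \<longleftrightarrow> j < r2"
    "\<And>j. j < b \<Longrightarrow> T 1 j \<le> 2 \<longleftrightarrow> j < t"
proof
  have mono0: "\<And>j j'. j \<le> j' \<Longrightarrow> j' < a \<Longrightarrow> T 0 j \<le> T 0 j'"
    and mono1: "\<And>j j'. j \<le> j' \<Longrightarrow> j' < b \<Longrightarrow> T 1 j \<le> T 1 j'"
    using ssyt3_row_mono[OF T] by (simp_all add: cell_triple_iff)
  show "T 0 j \<le> 1 \<longleftrightarrow> j < card {j. j < a \<and> T 0 j \<le> 1}" if "j < a" for j
    using mono_le_iff_less_card[OF mono0 that] .
  show "T 0 j \<le> 2 \<longleftrightarrow> j < card {j. j < a \<and> T 0 j \<le> 2}" if "j < a" for j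
    using mono_le_iff_less_card[OF mono0 that] .
  show "T 1 j \<le> 2 \<longleftrightarrow> j < card {j. j < b \<and> T 1 j \<le> 2}" if "j < b" for j
    using mono_le_iff_less_card[OF mono1 that] .
  show "card {j. j < a \<and> T 0 j \<le> 1} \<le> card {j. j < a \<and> T 0 j \<le> 2}"
    by (intro card_mono) auto
  show "card {j. j < a \<and> T 0 j \<le> 2} \<le> a" "card {j. j < b \<and> T 1 j \<le> 2} \<le> b"
    by (metis (no_types, lifting) card_lessThan card_mono finite_lessThan lessThan_iff
        mem_Collect_eq subsetI)+
qed

lemma ssyt3_eq_tableau3:
  assumes T: "ssyt3 (a, b, c) T" and "c \<le> b" "b \<le> a"
  obtains r1 r2 t where "T = tableau3 a b c r1 r2 t"
    "c \<le> t" "t \<le> r1" "b \<le> r2" "r1 \<le> r2" "r2 \<le> a" "t \<le> b"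
proof -
  obtain r1 r2 t where "r1 \<le> r2" "r2 \<le> a" "t \<le> b"
    and r1: "\<And>j. j < a \<Longrightarrow> T 0 j \<le> 1 \<longleftrightarrow> j < r1"
    and r2: "\<And>j. j < a \<Longrightarrow> T 0 j \<le> 2 \<longleftrightarrow> j < r2"
    and t: "\<And>j. j < b \<Longrightarrow> T 1 j \<le> 2 \<longleftrightarrow> j < t"
    using ssyt3_row_thresholds[OF T] by blast
  have entries: "\<And>i j. cell (a, b, c) i j \<Longrightarrow> T i j \<in> {1, 2, 3}"
    and zero: "\<And>i j. \<not> cell (a, b, c) i j \<Longrightarrow> T i j = 0"
    and col: "\<And>i j. cell (a, b, c) (Suc i) j \<Longrightarrow> T i j < T (Suc i) j"
    using T unfolding ssyt3_def by blast+
  have entry0: "T 0 j \<in> {1, 2, 3}" if "j < a" for j using entries that by (simp add: cell_triple_iff)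
  have entry1: "T 1 j \<in> {1, 2, 3}" if "j < b" for j using entries that by (simp add: cell_triple_iff)
  have entry2: "T 2 j \<in> {1, 2, 3}" if "j < c" for j using entries that by (simp add: cell_triple_iff)
  have col01: "T 0 j < T 1 j" if "j < b" for j using col[of 0] that by (simp add: cell_triple_iff)
  have col12: "T 1 j < T 2 j" if "j < c" for j
    using col[of 1] that by (simp add: cell_triple_iff numeral_2_eq_2)
  have row0: "T 0 j = (if j < r1 then 1 else if j < r2 then 2 else 3)" if "j < a" for j
    using r1 r2 entry0 that by fastforce
  have row1: "T 1 j = (if j < t then 2 else 3)" if "j < b" for j
    using t[OF that] entry1[OF that] col01[OF that] entry0[of j] that assms by fastforce
  have row2: "T 2 j = 3 \<and> j < t" if "j < c" for j
    using row1[of j] col12[OF that] entry2[OF that] t[of j] that assms by fastforce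
  have "c \<le> t" using row2[of "c - 1"] by (cases c) auto
  moreover have "t \<le> r1"
    using row1[of "t - 1"] col01[of "t - 1"] r1[of "t - 1"] \<open>t \<le> b\<close> assms by (cases t) auto
  moreover have "b \<le> r2"
    using row1[of "b - 1"] col01[of "b - 1"] r2[of "b - 1"] assms by (cases b) (auto split: if_splits)
  moreover have "T = tableau3 a b c r1 r2 t"
    using row0 row1 row2 zero by (intro ext) (auto simp: tableau3_def cell_triple_iff)
  ultimately show ?thesis using that \<open>r1 \<le> r2\<close> \<open>r2 \<le> a\<close> \<open>t \<le> b\<close> by blast
qed

text \<open>The admissible values of the parameter t of a tableau of shape (a,b,c) and content
  (x,y,z); the other two parameters are then r1 = x and r2 = x + y - t.\<close>
definition tableau3_params :: "nat \<Rightarrow> nat \<Rightarrow> nat \<Rightarrow> nat \<Rightarrow> nat \<Rightarrow> nat set" where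
  "tableau3_params a b c x y =
    {t. c \<le> t \<and> t \<le> b \<and> t \<le> x \<and> t \<le> y \<and> b + t \<le> x + y \<and> x + y \<le> a + t}"

lemma ssyt3_with_content_eq:
  assumes "c \<le> b" "b \<le> a"
  shows "{T. ssyt3 (a, b, c) T \<and> content3 (a, b, c) T = (x, y, z)} =
    (if x + y + z = a + b + c
     then (\<lambda>t. tableau3 a b c x (x + y - t) t) ` tableau3_params a b c x y else {})"
proof (intro equalityI subsetI)
  fix T assume "T \<in> {T. ssyt3 (a, b, c) T \<and> content3 (a, b, c) T = (x, y, z)}"
  then have T: "ssyt3 (a, b, c) T" and content: "content3 (a, b, c) T = (x, y, z)" by auto
  obtain r1 r2 t where T_eq: "T = tableau3 a b c r1 r2 t"
    and h: "c \<le> t" "t \<le> r1" "b \<le> r2" "r1 \<le> r2" "r2 \<le> a" "t \<le> b"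
    using ssyt3_eq_tableau3[OF T assms] by blast
  have "content3 (a, b, c) T = (r1, r2 - r1 + t, a - r2 + (b - t) + c)"
    unfolding T_eq by (rule content3_tableau3[OF h(4-6)])
  then have "(r1, r2 - r1 + t, a - r2 + (b - t) + c) = (x, y, z)"
    using content by simp
  with h have "x + y + z = a + b + c" "r1 = x" "r2 = x + y - t" "t \<in> tableau3_params a b c x y"
    unfolding tableau3_params_def by auto
  then show "T \<in> (if x + y + z = a + b + c
     then (\<lambda>t. tableau3 a b c x (x + y - t) t) ` tableau3_params a b c x y else {})"
    using T_eq by simp
next
  fix T assume "T \<in> (if x + y + z = a + b + c
     then (\<lambda>t. tableau3 a b c x (x + y - t) t) ` tableau3_params a b c x y else {})"
  then obtain t where "x + y + z = a + b + c" "t \<in> tableau3_params a b c x y"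
    and T_eq: "T = tableau3 a b c x (x + y - t) t"
    by (auto split: if_splits)
  moreover from this have h: "c \<le> t" "t \<le> x" "b \<le> x + y - t" "x \<le> x + y - t" "x + y - t \<le> a" "t \<le> b"
    unfolding tableau3_params_def by auto
  ultimately show "T \<in> {T. ssyt3 (a, b, c) T \<and> content3 (a, b, c) T = (x, y, z)}"
    using ssyt3_tableau3[OF h] content3_tableau3[OF h(4-6)] by auto
qed

lemma inj_on_tableau3_params:
  "inj_on (\<lambda>t. tableau3 a b c x (x + y - t) t) (tableau3_params a b c x y)"
proof (rule inj_onI, rule ccontr)
  fix t t' assume "t \<in> tableau3_params a b c x y" "t' \<in> tableau3_params a b c x y" "t \<noteq> t'"
  then have "tableau3 a b c x (x + y - t) t 1 (min t t') \<noteq> tableau3 a b c x (x + y - t') t' 1 (min t t')"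
    unfolding tableau3_params_def by (auto simp: tableau3_def min_def)
  moreover assume "tableau3 a b c x (x + y - t) t = tableau3 a b c x (x + y - t') t'"
  ultimately show False by simp
qed

lemma card_tableau3_params:
  "int (card (tableau3_params a b c x y)) =
     max 0 (min (min (int b) (int x)) (min (int y) (int x + int y - int b))
            - max (int c) (int x + int y - int a) + 1)"
proof -
  let ?lo = "max (int c) (int x + int y - int a)"
  let ?hi = "min (min (int b) (int x)) (min (int y) (int x + int y - int b))"
  have "int ` tableau3_params a b c x y = {?lo..?hi}"
  proof (intro equalityI subsetI)
    fix v assume v: "v \<in> {?lo..?hi}"
    then have "nat v \<in> tableau3_params a b c x y" unfolding tableau3_params_def by auto
    moreover have "v = int (nat v)" using v by simp
    ultimately show "v \<in> int ` tableau3_params a b c x y" by blast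
  qed (auto simp: tableau3_params_def)
  then have "card (tableau3_params a b c x y) = nat (?hi - ?lo + 1)"
    by (metis card_atLeastAtMost_int card_image inj_on_of_nat)
  then show ?thesis by simp
qed

text \<open>The Kostka number K_{(a,b,c),(x,y,z)}, extended by 0 to all integer weights.\<close>
definition kostka3 :: "int \<Rightarrow> int \<Rightarrow> int \<Rightarrow> int \<Rightarrow> int \<Rightarrow> int \<Rightarrow> int" where
  "kostka3 a b c x y z =
    (if 0 \<le> x \<and> 0 \<le> y \<and> 0 \<le> z \<and> x + y + z = a + b + c
     then max 0 (min (min b x) (min y (x + y - b)) - max c (x + y - a) + 1) else 0)"

lemma schur_coeff_eq_kostka3:
  assumes "c \<le> b" "b \<le> a"
  shows "schur_coeff (a, b, c) (x, y, z) = kostka3 (int a) (int b) (int c) (int x) (int y) (int z)"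
  unfolding schur_coeff_def ssyt3_with_content_eq[OF assms] kostka3_def
  by (simp add: card_image[OF inj_on_tableau3_params] card_tableau3_params)

section \<open>Difference operators and the bialternant formula\<close>

definition orthant_supported :: "(int \<Rightarrow> int \<Rightarrow> int \<Rightarrow> int) \<Rightarrow> bool" where
  "orthant_supported f \<longleftrightarrow> (\<forall>x y z. x < 0 \<or> y < 0 \<or> z < 0 \<longrightarrow> f x y z = 0)"

text \<open>Reading f as the coefficient function of a Laurent series F in X, Y, Z, the function
  diff12 f is the coefficient function of (X - Y) F; thus vdm_diff is multiplication by the
  Vandermonde product (X - Y)(X - Z)(Y - Z).\<close>
definition diff12 :: "(int \<Rightarrow> int \<Rightarrow> int \<Rightarrow> int) \<Rightarrow> int \<Rightarrow> int \<Rightarrow> int \<Rightarrow> int" where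
  "diff12 f x y z = f (x - 1) y z - f x (y - 1) z"

definition diff13 :: "(int \<Rightarrow> int \<Rightarrow> int \<Rightarrow> int) \<Rightarrow> int \<Rightarrow> int \<Rightarrow> int \<Rightarrow> int" where
  "diff13 f x y z = f (x - 1) y z - f x y (z - 1)"

definition diff23 :: "(int \<Rightarrow> int \<Rightarrow> int \<Rightarrow> int) \<Rightarrow> int \<Rightarrow> int \<Rightarrow> int \<Rightarrow> int" where
  "diff23 f x y z = f x (y - 1) z - f x y (z - 1)"

definition vdm_diff :: "(int \<Rightarrow> int \<Rightarrow> int \<Rightarrow> int) \<Rightarrow> int \<Rightarrow> int \<Rightarrow> int \<Rightarrow> int" where
  "vdm_diff f = diff12 (diff13 (diff23 f))"

lemma orthant_supported_diff:
  assumes "orthant_supported f"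
  shows "orthant_supported (diff12 f)" "orthant_supported (diff13 f)" "orthant_supported (diff23 f)"
  using assms unfolding orthant_supported_def diff12_def diff13_def diff23_def by auto

lemma shift_invariant_const:
  fixes g :: "int \<Rightarrow> 'a"
  assumes "\<And>k. g (k + 1) = g k"
  shows "g m = g n"
proof (induction m rule: int_induct[where k = n])
  case (step1 i)
  then show ?case using assms[of i] by simp
next
  case (step2 i)
  then show ?case using assms[of "i - 1"] by simp
qed simp

text \<open>Multiplication by X - Y, X - Z, Y - Z is injective on series supported in the
  nonnegative orthant: a kernel element is invariant under a shift that eventually leaves
  the orthant.\<close>
lemma orthant_supported_diff_eq_0:
  assumes f: "orthant_supported f"
  shows "(\<And>x y z. diff12 f x y z = 0) \<Longrightarrow> f x y z = 0"
    and "(\<And>x y z. diff13 f x y z = 0) \<Longrightarrow> f x y z = 0"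
    and "(\<And>x y z. diff23 f x y z = 0) \<Longrightarrow> f x y z = 0"
proof -
  assume d: "\<And>x y z. diff12 f x y z = 0"
  have "f (x + (k + 1)) (y - (k + 1)) z = f (x + k) (y - k) z" for k
    using d[of "x + k + 1" "y - k" z] by (simp add: diff12_def algebra_simps)
  from shift_invariant_const[of "\<lambda>k. f (x + k) (y - k) z", OF this, of 0 "y + 1"]
  show "f x y z = 0" using f unfolding orthant_supported_def by simp
next
  assume d: "\<And>x y z. diff13 f x y z = 0"
  have "f (x + (k + 1)) y (z - (k + 1)) = f (x + k) y (z - k)" for k
    using d[of "x + k + 1" y "z - k"] by (simp add: diff13_def algebra_simps)
  from shift_invariant_const[of "\<lambda>k. f (x + k) y (z - k)", OF this, of 0 "z + 1"]
  show "f x y z = 0" using f unfolding orthant_supported_def by simp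
next
  assume d: "\<And>x y z. diff23 f x y z = 0"
  have "f x (y + (k + 1)) (z - (k + 1)) = f x (y + k) (z - k)" for k
    using d[of x "y + k + 1" "z - k"] by (simp add: diff23_def algebra_simps)
  from shift_invariant_const[of "\<lambda>k. f x (y + k) (z - k)", OF this, of 0 "z + 1"]
  show "f x y z = 0" using f unfolding orthant_supported_def by simp
qed

lemma vdm_diff_inj:
  assumes "orthant_supported f" "orthant_supported g" "vdm_diff f = vdm_diff g"
  shows "f = g"
proof -
  define h where "h x y z = f x y z - g x y z" for x y z
  have h: "orthant_supported h" using assms(1,2) unfolding orthant_supported_def h_def by simp
  have "diff12 (diff13 (diff23 h)) x y z = 0" for x y z
    using fun_cong[OF fun_cong[OF fun_cong[OF assms(3)]], of x y z]
    unfolding vdm_diff_def diff12_def diff13_def diff23_def h_def by linarith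
  then have "diff13 (diff23 h) x y z = 0" for x y z
    using orthant_supported_diff_eq_0(1) h orthant_supported_diff by blast
  then have "diff23 h x y z = 0" for x y z
    using orthant_supported_diff_eq_0(2) h orthant_supported_diff by blast
  then have "h x y z = 0" for x y z
    using orthant_supported_diff_eq_0(3) h by blast
  then show ?thesis unfolding h_def by (intro ext) simp
qed


text \<open>The coefficient of X^x Y^y Z^z in the alternant det (X_i^{q_j}).\<close>
definition alternant :: "int \<Rightarrow> int \<Rightarrow> int \<Rightarrow> int \<Rightarrow> int \<Rightarrow> int \<Rightarrow> int" where
  "alternant q1 q2 q3 x y z =
      (if x = q1 \<and> y = q2 \<and> z = q3 then 1 else 0) - (if x = q2 \<and> y = q1 \<and> z = q3 then 1 else 0)
    - (if x = q1 \<and> y = q3 \<and> z = q2 then 1 else 0) - (if x = q3 \<and> y = q2 \<and> z = q1 then 1 else 0)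
    + (if x = q2 \<and> y = q3 \<and> z = q1 then 1 else 0) + (if x = q3 \<and> y = q1 \<and> z = q2 then 1 else 0)"

definition interval_indicator :: "int \<Rightarrow> int \<Rightarrow> int \<Rightarrow> int" where
  "interval_indicator a b u = (if b \<le> u \<and> u \<le> a then 1 else 0)"

lemma interval_indicator_diff:
  "b \<le> a \<Longrightarrow> interval_indicator a b u - interval_indicator a b (u - 1) =
     (if u = b then 1 else 0) - (if u = a + 1 then 1 else 0)"
  unfolding interval_indicator_def by auto

text \<open>Kostka numbers count Gelfand-Tsetlin patterns with top row (a, b, c); differencing
  in y and z leaves the antisymmetrised indicator that the middle row (y - 1, z) interlaces
  (a, b, c).\<close>
lemma diff23_kostka3:
  assumes "0 \<le> c" "c \<le> b" "b \<le> a"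
  shows "diff23 (kostka3 a b c) x y z =
    (if x + y + z = a + b + c + 1
     then interval_indicator a b (y - 1) * interval_indicator b c z
        - interval_indicator a b (z - 1) * interval_indicator b c y
     else 0)"
proof -
  have "diff23 (kostka3 a b c) x y z =
      (if b \<le> y - 1 \<and> y - 1 \<le> a \<and> c \<le> z \<and> z \<le> b \<and> x + y + z = a + b + c + 1 then 1 else 0)
    - (if b \<le> z - 1 \<and> z - 1 \<le> a \<and> c \<le> y \<and> y \<le> b \<and> x + y + z = a + b + c + 1 then 1 else 0)"
    using assms unfolding diff23_def kostka3_def min_def max_def by (simp split: if_splits)
  then show ?thesis by (simp add: interval_indicator_def)
qed

lemma vdm_diff_kostka3:
  assumes "0 \<le> c" "c \<le> b" "b \<le> a"
  shows "vdm_diff (kostka3 a b c) x y z = alternant (a + 2) (b + 1) c x y z"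
proof (cases "x + y + z = a + b + c + 3")
  case False
  then show ?thesis
    unfolding vdm_diff_def diff12_def diff13_def diff23_kostka3[OF assms] alternant_def by auto
next
  case True
  let ?P = "interval_indicator a b" and ?Q = "interval_indicator b c"
  have "vdm_diff (kostka3 a b c) x y z =
      (?P (y - 1) - ?P (y - 1 - 1)) * (?Q z - ?Q (z - 1))
    - (?P (z - 1) - ?P (z - 1 - 1)) * (?Q y - ?Q (y - 1))"
    unfolding vdm_diff_def diff12_def diff13_def diff23_kostka3[OF assms]
    using True by (simp add: algebra_simps)
  also have "\<dots> =
      ((if y - 1 = b then 1 else 0) - (if y - 1 = a + 1 then 1 else 0))
        * ((if z = c then 1 else 0) - (if z = b + 1 then 1 else 0))
    - ((if z - 1 = b then 1 else 0) - (if z - 1 = a + 1 then 1 else 0))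
        * ((if y = c then 1 else 0) - (if y = b + 1 then 1 else 0))"
    using assms by (simp only: interval_indicator_diff)
  also have "\<dots> = alternant (a + 2) (b + 1) c x y z"
    unfolding alternant_def using True assms by auto
  finally show ?thesis .
qed

lemma kostka3_swap12: "kostka3 a b c x y z = kostka3 a b c y x z"
  unfolding kostka3_def by (simp add: ac_simps min.left_commute min.commute)

lemma kostka3_swap23:
  "0 \<le> c \<Longrightarrow> c \<le> b \<Longrightarrow> b \<le> a \<Longrightarrow> kostka3 a b c x y z = kostka3 a b c x z y"
  unfolding kostka3_def min_def max_def by (simp split: if_splits)

section \<open>Products with alternants\<close>

definition kostka :: "triple \<Rightarrow> int \<Rightarrow> int \<Rightarrow> int \<Rightarrow> int" where
  "kostka p = (case p of (a, b, c) \<Rightarrow> kostka3 (int a) (int b) (int c))"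

definition alternant_rho :: "triple \<Rightarrow> int \<Rightarrow> int \<Rightarrow> int \<Rightarrow> int" where
  "alternant_rho p = (case p of (a, b, c) \<Rightarrow> alternant (int a + 2) (int b + 1) (int c))"

lemma schur_coeff_eq_kostka:
  "is_part3 p \<Longrightarrow> schur_coeff p (x, y, z) = kostka p (int x) (int y) (int z)"
  by (cases p) (simp add: is_part3_def kostka_def schur_coeff_eq_kostka3)

lemma vdm_diff_kostka: "is_part3 p \<Longrightarrow> vdm_diff (kostka p) = alternant_rho p"
  by (cases p) (auto simp: is_part3_def kostka_def alternant_rho_def vdm_diff_kostka3 intro!: ext)

lemma orthant_supported_kostka: "orthant_supported (kostka p)"
  by (cases p) (simp add: orthant_supported_def kostka_def kostka3_def)

lemma kostka_eq_0:
  "\<not> (0 \<le> x \<and> 0 \<le> y \<and> 0 \<le> z \<and> x + y + z = int (size3 p)) \<Longrightarrow> kostka p x y z = 0"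
  by (cases p) (auto simp: kostka_def kostka3_def size3_def)

lemma kostka_swap12: "kostka p x y z = kostka p y x z"
  by (cases p) (simp add: kostka_def kostka3_swap12[of _ _ _ x])

lemma kostka_swap23: "is_part3 p \<Longrightarrow> kostka p x y z = kostka p x z y"
  by (cases p) (simp add: kostka_def is_part3_def kostka3_swap23)

definition box3 :: "int \<Rightarrow> (int \<times> int \<times> int) set" where
  "box3 M = {0..M} \<times> {0..M} \<times> {0..M}"

text \<open>Product of series, when g is supported in box3 M.\<close>
definition conv3 ::
  "int \<Rightarrow> (int \<Rightarrow> int \<Rightarrow> int \<Rightarrow> int) \<Rightarrow> (int \<Rightarrow> int \<Rightarrow> int \<Rightarrow> int) \<Rightarrow> int \<Rightarrow> int \<Rightarrow> int \<Rightarrow> int"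
  where "conv3 M g F x y z = (\<Sum>(i, j, k)\<in>box3 M. g i j k * F (x - i) (y - j) (z - k))"

lemma vdm_diff_conv3: "vdm_diff (conv3 M g F) = conv3 M g (vdm_diff F)"
proof -
  have "diff12 (conv3 M g F) = conv3 M g (diff12 F)" "diff13 (conv3 M g F) = conv3 M g (diff13 F)"
    "diff23 (conv3 M g F) = conv3 M g (diff23 F)" for F
    by (intro ext; simp add: diff12_def diff13_def diff23_def conv3_def case_prod_beta'
        sum_subtractf[symmetric] right_diff_distrib algebra_simps)+
  then show ?thesis by (simp add: vdm_diff_def)
qed

lemma sum_box3_indicator:
  fixes g :: "int \<Rightarrow> int \<Rightarrow> int \<Rightarrow> int"
  assumes "\<And>i j k. g i j k \<noteq> 0 \<Longrightarrow> (i, j, k) \<in> box3 M"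
  shows "(\<Sum>(i, j, k)\<in>box3 M. g i j k * (if x - i = p1 \<and> y - j = p2 \<and> z - k = p3 then 1 else 0))
    = g (x - p1) (y - p2) (z - p3)"
proof -
  have "(\<Sum>(i, j, k)\<in>box3 M. g i j k * (if x - i = p1 \<and> y - j = p2 \<and> z - k = p3 then 1 else 0))
      = (\<Sum>q\<in>box3 M. if q = (x - p1, y - p2, z - p3) then g (x - p1) (y - p2) (z - p3) else 0)"
    by (rule sum.cong[OF refl]) (auto split: if_splits)
  also have "\<dots> = g (x - p1) (y - p2) (z - p3)"
    using assms[of "x - p1" "y - p2" "z - p3"] by (auto simp: box3_def)
  finally show ?thesis .
qed

text \<open>The coefficient of X^x Y^y Z^z in the series of g times the alternant of (q1, q2, q3).\<close>
definition alt_shift_sum ::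
  "(int \<Rightarrow> int \<Rightarrow> int \<Rightarrow> int) \<Rightarrow> int \<Rightarrow> int \<Rightarrow> int \<Rightarrow> int \<Rightarrow> int \<Rightarrow> int \<Rightarrow> int" where
  "alt_shift_sum g q1 q2 q3 x y z =
      g (x - q1) (y - q2) (z - q3) - g (x - q2) (y - q1) (z - q3) - g (x - q1) (y - q3) (z - q2)
    - g (x - q3) (y - q2) (z - q1) + g (x - q2) (y - q3) (z - q1) + g (x - q3) (y - q1) (z - q2)"

lemma conv3_alternant:
  assumes "\<And>i j k. g i j k \<noteq> 0 \<Longrightarrow> (i, j, k) \<in> box3 M"
  shows "conv3 M g (alternant q1 q2 q3) x y z = alt_shift_sum g q1 q2 q3 x y z"
  unfolding conv3_def alternant_def alt_shift_sum_def
  by (simp add: case_prod_beta' right_diff_distrib distrib_left sum.distrib sum_subtractf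
      sum_box3_indicator[OF assms, simplified case_prod_beta'])

lemma sum_atMost_as_int_interval:
  fixes F :: "int \<Rightarrow> 'a::comm_monoid_add"
  assumes "0 \<le> M" and "\<And>i. 0 \<le> i \<Longrightarrow> int a < i \<or> M < i \<Longrightarrow> F i = 0"
  shows "(\<Sum>b\<le>a. F (int b)) = (\<Sum>i\<in>{0..M}. F i)"
proof -
  have "int ` {..a} = {0..int a}"
    by (auto simp: image_iff intro!: bexI[where x = "nat _"])
  then have "(\<Sum>b\<le>a. F (int b)) = (\<Sum>i\<in>{0..int a}. F i)"
    by (metis inj_on_of_nat sum.reindex_cong)
  also have "\<dots> = (\<Sum>i\<in>{0..max (int a) M}. F i)"
    by (rule sum.mono_neutral_left) (use assms in auto)
  also have "\<dots> = (\<Sum>i\<in>{0..M}. F i)"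
    by (rule sum.mono_neutral_right) (use assms in auto)
  finally show ?thesis .
qed

lemma schur_prod_coeff_eq_conv3:
  assumes "is_part3 mu" "is_part3 nu"
  shows "schur_prod_coeff mu nu (a1, a2, a3) =
    conv3 (int (size3 mu)) (kostka mu) (kostka nu) (int a1) (int a2) (int a3)"
proof -
  define M where "M = int (size3 mu)"
  define G where "G i j k = kostka mu i j k * kostka nu (int a1 - i) (int a2 - j) (int a3 - k)"
    for i j k
  have G0: "G i j k = 0" if "0 \<le> i" "0 \<le> j" "0 \<le> k"
    "int a1 < i \<or> M < i \<or> int a2 < j \<or> M < j \<or> int a3 < k \<or> M < k" for i j k
    using that kostka_eq_0[of i j k mu] kostka_eq_0[of "int a1 - i" "int a2 - j" "int a3 - k" nu]
    unfolding G_def M_def by fastforce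
  then have sum_G: "(\<Sum>b\<le>a. F (int b)) = (\<Sum>i\<in>{0..M}. F i)"
    if "\<And>i. 0 \<le> i \<Longrightarrow> int a < i \<or> M < i \<Longrightarrow> F i = 0" for a and F :: "int \<Rightarrow> int"
    using sum_atMost_as_int_interval[of M a F] that unfolding M_def by simp
  have "schur_prod_coeff mu nu (a1, a2, a3) = (\<Sum>b1\<le>a1. \<Sum>b2\<le>a2. \<Sum>b3\<le>a3. G (int b1) (int b2) (int b3))"
    unfolding schur_prod_coeff_def G_def prod.case
    by (intro sum.cong refl) (simp add: schur_coeff_eq_kostka assms of_nat_diff)
  also have "\<dots> = (\<Sum>b1\<le>a1. \<Sum>b2\<le>a2. \<Sum>k\<in>{0..M}. G (int b1) (int b2) k)"
    by (intro sum.cong refl sum_G) (use G0 in auto)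
  also have "\<dots> = (\<Sum>b1\<le>a1. \<Sum>j\<in>{0..M}. \<Sum>k\<in>{0..M}. G (int b1) j k)"
    by (intro sum.cong refl sum_G) (auto intro!: sum.neutral G0)
  also have "\<dots> = (\<Sum>i\<in>{0..M}. \<Sum>j\<in>{0..M}. \<Sum>k\<in>{0..M}. G i j k)"
    by (intro sum_G) (auto intro!: sum.neutral G0)
  also have "\<dots> = conv3 M (kostka mu) (kostka nu) (int a1) (int a2) (int a3)"
    unfolding conv3_def box3_def G_def by (simp add: sum.cartesian_product)
  finally show ?thesis unfolding M_def .
qed

section \<open>Expansion into Schur polynomials\<close>

lemma antisymmetric_eq_0:
  fixes F :: "int \<Rightarrow> int \<Rightarrow> int \<Rightarrow> int"
  assumes swap12: "\<And>x y z. F y x z = - F x y z" and swap23: "\<And>x y z. F x z y = - F x y z"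
    and chamber: "\<And>x y z. z < y \<Longrightarrow> y < x \<Longrightarrow> F x y z = 0"
  shows "F x y z = 0"
proof -
  note swaps = swap12[of x y z] swap12[of y x z] swap12[of x z y] swap12[of z x y]
    swap12[of y z x] swap12[of z y x] swap23[of x y z] swap23[of y x z] swap23[of x z y]
    swap23[of z x y] swap23[of y z x] swap23[of z y x]
  consider "z < y \<and> y < x" | "z < x \<and> x < y" | "y < z \<and> z < x" | "y < x \<and> x < z"
    | "x < z \<and> z < y" | "x < y \<and> y < z" | "x = y" | "y = z" | "x = z"
    by linarith
  then show ?thesis
  proof cases
    case 1 then show ?thesis by (intro chamber) auto
  next
    case 2 then have "F y x z = 0" by (intro chamber) auto
    with swaps show ?thesis by linarith
  next
    case 3 then have "F x z y = 0" by (intro chamber) auto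
    with swaps show ?thesis by linarith
  next
    case 4 then have "F z x y = 0" by (intro chamber) auto
    with swaps show ?thesis by linarith
  next
    case 5 then have "F y z x = 0" by (intro chamber) auto
    with swaps show ?thesis by linarith
  next
    case 6 then have "F z y x = 0" by (intro chamber) auto
    with swaps show ?thesis by linarith
  qed (use swaps in auto)
qed

lemma alternant_swap12: "alternant q1 q2 q3 y x z = - alternant q1 q2 q3 x y z"
  and alternant_swap23: "alternant q1 q2 q3 x z y = - alternant q1 q2 q3 x y z"
  unfolding alternant_def by (simp_all add: conj_ac)

lemma alternant_chamber:
  "q3 < q2 \<Longrightarrow> q2 < q1 \<Longrightarrow> z < y \<Longrightarrow> y < x \<Longrightarrow>
    alternant q1 q2 q3 x y z = (if x = q1 \<and> y = q2 \<and> z = q3 then 1 else 0)"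
  unfolding alternant_def by auto

lemma alt_shift_sum_swap12:
  assumes "\<And>u v w. g u v w = g v u w"
  shows "alt_shift_sum g q1 q2 q3 y x z = - alt_shift_sum g q1 q2 q3 x y z"
  unfolding alt_shift_sum_def
  using assms[of "y - q1" "x - q2" "z - q3"] assms[of "y - q2" "x - q1" "z - q3"]
    assms[of "y - q1" "x - q3" "z - q2"] assms[of "y - q3" "x - q2" "z - q1"]
    assms[of "y - q2" "x - q3" "z - q1"] assms[of "y - q3" "x - q1" "z - q2"]
  by linarith

lemma alt_shift_sum_swap23:
  assumes "\<And>u v w. g u v w = g u w v"
  shows "alt_shift_sum g q1 q2 q3 x z y = - alt_shift_sum g q1 q2 q3 x y z"
  unfolding alt_shift_sum_def
  using assms[of "x - q1" "z - q2" "y - q3"] assms[of "x - q2" "z - q1" "y - q3"]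
    assms[of "x - q1" "z - q3" "y - q2"] assms[of "x - q3" "z - q2" "y - q1"]
    assms[of "x - q2" "z - q3" "y - q1"] assms[of "x - q3" "z - q1" "y - q2"]
  by linarith

definition lin_comb ::
  "'p set \<Rightarrow> ('p \<Rightarrow> int) \<Rightarrow> ('p \<Rightarrow> int \<Rightarrow> int \<Rightarrow> int \<Rightarrow> int) \<Rightarrow> int \<Rightarrow> int \<Rightarrow> int \<Rightarrow> int"
  where "lin_comb A c F x y z = (\<Sum>p\<in>A. c p * F p x y z)"

lemma vdm_diff_lin_comb: "vdm_diff (lin_comb A c F) = lin_comb A c (\<lambda>p. vdm_diff (F p))"
proof -
  have "diff12 (lin_comb A c F) = lin_comb A c (\<lambda>p. diff12 (F p))"
    "diff13 (lin_comb A c F) = lin_comb A c (\<lambda>p. diff13 (F p))"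
    "diff23 (lin_comb A c F) = lin_comb A c (\<lambda>p. diff23 (F p))" for F
    by (intro ext; simp add: diff12_def diff13_def diff23_def lin_comb_def
        sum_subtractf[symmetric] right_diff_distrib)+
  then show ?thesis by (simp add: vdm_diff_def)
qed

lemma vdm_diff_lin_comb_kostka:
  "(\<And>p. p \<in> A \<Longrightarrow> is_part3 p) \<Longrightarrow> vdm_diff (lin_comb A c kostka) = lin_comb A c alternant_rho"
  unfolding vdm_diff_lin_comb lin_comb_def by (intro ext sum.cong refl) (simp add: vdm_diff_kostka)

lemma orthant_supported_lin_comb_kostka: "orthant_supported (lin_comb A c kostka)"
  using orthant_supported_kostka unfolding orthant_supported_def lin_comb_def by simp

lemma lin_comb_alternant_rho_swap12: "lin_comb A c alternant_rho y x z = - lin_comb A c alternant_rho x y z"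
  and lin_comb_alternant_rho_swap23: "lin_comb A c alternant_rho x z y = - lin_comb A c alternant_rho x y z"
  unfolding lin_comb_def alternant_rho_def
  by (simp_all add: case_prod_beta alternant_swap12[of _ _ _ y] alternant_swap23[of _ _ _ x z]
      sum_negf[symmetric])

lemma lin_comb_alternant_rho_chamber:
  assumes "finite A" "\<And>p. p \<in> A \<Longrightarrow> is_part3 p" "z < y" "y < x"
  shows "lin_comb A c alternant_rho x y z =
    (if 0 \<le> z \<and> (nat (x - 2), nat (y - 1), nat z) \<in> A then c (nat (x - 2), nat (y - 1), nat z) else 0)"
proof -
  have "lin_comb A c alternant_rho x y z =
      (\<Sum>p\<in>A. if 0 \<le> z \<and> p = (nat (x - 2), nat (y - 1), nat z) then c p else 0)"
    unfolding lin_comb_def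
  proof (rule sum.cong[OF refl])
    fix p assume "p \<in> A"
    moreover obtain a b d where p: "p = (a, b, d)" by (cases p)
    ultimately have "d \<le> b" "b \<le> a" using assms(2) by (auto simp: is_part3_def)
    then show "c p * alternant_rho p x y z =
      (if 0 \<le> z \<and> p = (nat (x - 2), nat (y - 1), nat z) then c p else 0)"
      using assms(3,4) by (auto simp: p alternant_rho_def alternant_chamber)
  qed
  also have "\<dots> = (if 0 \<le> z \<and> (nat (x - 2), nat (y - 1), nat z) \<in> A
      then c (nat (x - 2), nat (y - 1), nat z) else 0)"
    using assms(1) by (cases "0 \<le> z") (auto simp: sum.delta)
  finally show ?thesis .
qed

lemma lin_comb_kostka_coeff:
  assumes "finite A" "\<And>p. p \<in> A \<Longrightarrow> is_part3 p" "(a, b, d) \<in> A"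
  shows "vdm_diff (lin_comb A c kostka) (int a + 2) (int b + 1) (int d) = c (a, b, d)"
proof -
  have "vdm_diff (lin_comb A c kostka) = lin_comb A c alternant_rho"
    using assms(2) by (rule vdm_diff_lin_comb_kostka)
  moreover have "d \<le> b" "b \<le> a" using assms(2,3) by (auto simp: is_part3_def)
  ultimately show ?thesis using lin_comb_alternant_rho_chamber[OF assms(1,2)] assms(3) by simp
qed

lemma finite_parts3_of_size: "finite (parts3_of_size n)"
  by (rule finite_subset[of _ "{..n} \<times> {..n} \<times> {..n}"])
    (auto simp: parts3_of_size_def size3_def)

definition lr_alt_sum :: "triple \<Rightarrow> triple \<Rightarrow> triple \<Rightarrow> int" where
  "lr_alt_sum la mu nu = (case la of (l1, l2, l3) \<Rightarrow> case nu of (n1, n2, n3) \<Rightarrow>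
     alt_shift_sum (kostka mu) (int n1 + 2) (int n2 + 1) (int n3) (int l1 + 2) (int l2 + 1) (int l3))"

lemma vdm_diff_conv3_kostka:
  assumes "is_part3 (n1, n2, n3)"
  shows "vdm_diff (conv3 (int (size3 mu)) (kostka mu) (kostka (n1, n2, n3))) =
    alt_shift_sum (kostka mu) (int n1 + 2) (int n2 + 1) (int n3)"
proof -
  have "(i, j, k) \<in> box3 (int (size3 mu))" if "kostka mu i j k \<noteq> 0" for i j k
  proof -
    have "0 \<le> i \<and> 0 \<le> j \<and> 0 \<le> k \<and> i + j + k = int (size3 mu)"
      using kostka_eq_0 that by blast
    then show ?thesis by (auto simp: box3_def)
  qed
  then show ?thesis
    by (intro ext) (simp add: vdm_diff_conv3 vdm_diff_kostka[OF assms] alternant_rho_def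
        conv3_alternant)
qed

lemma alt_shift_sum_kostka_eq_0:
  assumes "\<not> (0 \<le> z \<and> x + y + z = int (size3 mu) + int (n1 + n2 + n3) + 3)"
  shows "alt_shift_sum (kostka mu) (int n1 + 2) (int n2 + 1) (int n3) x y z = 0"
proof -
  have "kostka mu (x - u) (y - v) (z - w) = 0" if "0 \<le> w" "u + v + w = int (n1 + n2 + n3) + 3"
    for u v w
    using assms that by (intro kostka_eq_0) auto
  then show ?thesis unfolding alt_shift_sum_def by simp
qed

lemma alt_shift_sum_kostka_eq_lin_comb:
  assumes mu: "is_part3 mu" and nu: "is_part3 (n1, n2, n3)"
  shows "alt_shift_sum (kostka mu) (int n1 + 2) (int n2 + 1) (int n3) =
    lin_comb (parts3_of_size (size3 mu + size3 (n1, n2, n3))) (\<lambda>la. lr_alt_sum la mu (n1, n2, n3))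
      alternant_rho"
    (is "?S = lin_comb ?A ?c alternant_rho")
proof -
  have A: "finite ?A" "\<And>p. p \<in> ?A \<Longrightarrow> is_part3 p"
    by (simp_all add: finite_parts3_of_size) (simp add: parts3_of_size_def)
  have "?S x y z = lin_comb ?A ?c alternant_rho x y z" if "z < y" "y < x" for x y z
  proof (cases "0 \<le> z \<and> x + y + z = int (size3 mu) + int (n1 + n2 + n3) + 3")
    case True
    then have "(nat (x - 2), nat (y - 1), nat z) \<in> ?A"
      using that by (auto simp: parts3_of_size_def is_part3_def size3_def)
    then show ?thesis
      using True that by (simp add: lin_comb_alternant_rho_chamber[OF A that] lr_alt_sum_def)
  next
    case False
    then have "(nat (x - 2), nat (y - 1), nat z) \<notin> ?A \<or> z < 0"
      using that by (auto simp: parts3_of_size_def size3_def)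
    then show ?thesis
      using False by (auto simp: lin_comb_alternant_rho_chamber[OF A that] alt_shift_sum_kostka_eq_0)
  qed
  note chamber = this
  have S12: "?S y x z = - ?S x y z" for x y z
    by (rule alt_shift_sum_swap12) (rule kostka_swap12)
  have S23: "?S x z y = - ?S x y z" for x y z
    by (rule alt_shift_sum_swap23) (rule kostka_swap23[OF mu])
  have "?S x y z - lin_comb ?A ?c alternant_rho x y z = 0" for x y z
  proof (rule antisymmetric_eq_0[where F = "\<lambda>x y z. ?S x y z - lin_comb ?A ?c alternant_rho x y z"])
    show "?S y x z - lin_comb ?A ?c alternant_rho y x z =
        - (?S x y z - lin_comb ?A ?c alternant_rho x y z)" for x y z
      using S12[of x y z] lin_comb_alternant_rho_swap12[where x = x and y = y and z = z] by simp
    show "?S x z y - lin_comb ?A ?c alternant_rho x z y =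
        - (?S x y z - lin_comb ?A ?c alternant_rho x y z)" for x y z
      using S23[of x y z] lin_comb_alternant_rho_swap23[where x = x and y = y and z = z] by simp
  qed (simp add: chamber)
  then show ?thesis by (intro ext) simp
qed

lemma orthant_supported_eq_iff:
  assumes "orthant_supported f" "orthant_supported g"
  shows "f = g \<longleftrightarrow> (\<forall>x y z. f (int x) (int y) (int z) = g (int x) (int y) (int z))"
proof (intro iffI ext)
  fix x y z
  assume eq: "\<forall>x y z. f (int x) (int y) (int z) = g (int x) (int y) (int z)"
  show "f x y z = g x y z"
  proof (cases "x < 0 \<or> y < 0 \<or> z < 0")
    case False
    then show ?thesis using eq[rule_format, of "nat x" "nat y" "nat z"] by simp
  qed (use assms in \<open>auto simp: orthant_supported_def\<close>)
qed simp

lemma orthant_supported_conv3: "orthant_supported F \<Longrightarrow> orthant_supported (conv3 M g F)"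
  unfolding orthant_supported_def conv3_def box3_def by (auto intro!: sum.neutral)

lemma conv3_kostka_eq_lin_comb:
  assumes mu: "is_part3 mu" and nu: "is_part3 nu"
  shows "conv3 (int (size3 mu)) (kostka mu) (kostka nu) =
    lin_comb (parts3_of_size (size3 mu + size3 nu)) (\<lambda>la. lr_alt_sum la mu nu) kostka"
proof (rule vdm_diff_inj)
  obtain n1 n2 n3 where nu_eq: "nu = (n1, n2, n3)" by (cases nu)
  show "vdm_diff (conv3 (int (size3 mu)) (kostka mu) (kostka nu)) =
    vdm_diff (lin_comb (parts3_of_size (size3 mu + size3 nu)) (\<lambda>la. lr_alt_sum la mu nu) kostka)"
    using nu vdm_diff_lin_comb_kostka[of "parts3_of_size (size3 mu + size3 nu)"] unfolding nu_eq
    by (simp add: vdm_diff_conv3_kostka alt_shift_sum_kostka_eq_lin_comb[OF mu] parts3_of_size_def)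
qed (simp_all add: orthant_supported_conv3 orthant_supported_kostka orthant_supported_lin_comb_kostka)

definition lr_expansion :: "triple \<Rightarrow> triple \<Rightarrow> (triple \<Rightarrow> int) \<Rightarrow> bool" where
  "lr_expansion mu nu c \<longleftrightarrow>
    (\<forall>al. schur_prod_coeff mu nu al =
       (\<Sum>p\<in>parts3_of_size (size3 mu + size3 nu). c p * schur_coeff p al)) \<and>
    (\<forall>p. p \<notin> parts3_of_size (size3 mu + size3 nu) \<longrightarrow> c p = 0)"

lemma lr_expansion_iff:
  assumes mu: "is_part3 mu" and nu: "is_part3 nu"
  shows "lr_expansion mu nu c \<longleftrightarrow>
    conv3 (int (size3 mu)) (kostka mu) (kostka nu) =
      lin_comb (parts3_of_size (size3 mu + size3 nu)) c kostka \<and>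
    (\<forall>p. p \<notin> parts3_of_size (size3 mu + size3 nu) \<longrightarrow> c p = 0)"
proof -
  let ?A = "parts3_of_size (size3 mu + size3 nu)"
  have "(\<Sum>p\<in>?A. c p * schur_coeff p (x, y, z)) = lin_comb ?A c kostka (int x) (int y) (int z)"
    for x y z
    unfolding lin_comb_def
    by (intro sum.cong refl) (simp add: schur_coeff_eq_kostka parts3_of_size_def)
  then have "(\<forall>al. schur_prod_coeff mu nu al = (\<Sum>p\<in>?A. c p * schur_coeff p al)) \<longleftrightarrow>
      (\<forall>x y z. conv3 (int (size3 mu)) (kostka mu) (kostka nu) (int x) (int y) (int z) =
        lin_comb ?A c kostka (int x) (int y) (int z))"
    by (simp add: split_paired_All schur_prod_coeff_eq_conv3[OF mu nu])
  also have "\<dots> \<longleftrightarrow> conv3 (int (size3 mu)) (kostka mu) (kostka nu) = lin_comb ?A c kostka"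
    by (intro orthant_supported_eq_iff[symmetric] orthant_supported_conv3
        orthant_supported_kostka orthant_supported_lin_comb_kostka)
  finally show ?thesis unfolding lr_expansion_def by blast
qed

lemma lin_comb_kostka_coeff_eq:
  assumes "finite A" "\<And>p. p \<in> A \<Longrightarrow> is_part3 p"
    and "lin_comb A c kostka = lin_comb A c' kostka" "p \<in> A"
  shows "c p = c' p"
proof -
  obtain a b d where p: "p = (a, b, d)" by (cases p)
  show ?thesis
    using lin_comb_kostka_coeff[OF assms(1,2), of a b] assms(3,4) unfolding p by metis
qed

lemma lr_alt_sum_eq_0:
  assumes "is_part3 la" "la \<notin> parts3_of_size (size3 mu + size3 nu)"
  shows "lr_alt_sum la mu nu = 0"
proof -
  obtain l1 l2 l3 n1 n2 n3 where "la = (l1, l2, l3)" "nu = (n1, n2, n3)"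
    by (cases la, cases nu)
  moreover have "size3 la \<noteq> size3 mu + size3 nu"
    using assms unfolding parts3_of_size_def by simp
  ultimately show ?thesis
    unfolding lr_alt_sum_def by (auto intro!: alt_shift_sum_kostka_eq_0 simp: size3_def)
qed

lemma lr_coeff_eq_lr_alt_sum:
  assumes la: "is_part3 la" and mu: "is_part3 mu" and nu: "is_part3 nu"
  shows "lr_coeff la mu nu = lr_alt_sum la mu nu"
proof -
  define A where "A = parts3_of_size (size3 mu + size3 nu)"
  have A: "finite A" "\<And>p. p \<in> A \<Longrightarrow> is_part3 p"
    unfolding A_def by (simp_all add: finite_parts3_of_size) (simp add: parts3_of_size_def)
  define c0 where "c0 p = (if p \<in> A then lr_alt_sum p mu nu else 0)" for p
  have "lin_comb A c0 kostka = lin_comb A (\<lambda>p. lr_alt_sum p mu nu) kostka"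
    unfolding lin_comb_def c0_def by (intro ext sum.cong) auto
  then have c0: "lr_expansion mu nu c0"
    using conv3_kostka_eq_lin_comb[OF mu nu] by (simp add: lr_expansion_iff[OF mu nu] c0_def A_def)
  have "c = c0" if "lr_expansion mu nu c" for c
  proof
    fix p
    show "c p = c0 p"
    proof (cases "p \<in> A")
      case True
      have "lin_comb A c kostka = lin_comb A c0 kostka"
        using that c0 by (simp add: lr_expansion_iff[OF mu nu] A_def)
      with A True show ?thesis by (intro lin_comb_kostka_coeff_eq)
    next
      case False
      then have "c p = 0" using that unfolding lr_expansion_def A_def by blast
      with False show ?thesis by (simp add: c0_def)
    qed
  qed
  with c0 have "(THE c. lr_expansion mu nu c) = c0" by (rule the_equality)
  then have "lr_coeff la mu nu = c0 la"
    unfolding lr_coeff_def lr_expansion_def[abs_def] by simp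
  then show ?thesis using lr_alt_sum_eq_0[OF la] by (simp add: c0_def A_def)
qed

section \<open>The facet condition\<close>

lemma kostka3_alt_sum_eq_1_iff:
  fixes l1 l2 l3 m1 m2 m3 n1 n2 n3 :: int
  assumes "0 \<le> l3" "l3 \<le> l2" "l2 \<le> l1" "0 \<le> m3" "m3 \<le> m2" "m2 \<le> m1"
    "0 \<le> n3" "n3 \<le> n2" "n2 \<le> n1"
  shows "alt_shift_sum (kostka3 m1 m2 m3) (n1 + 2) (n2 + 1) n3 (l1 + 2) (l2 + 1) l3 = 1 \<longleftrightarrow>
    l1 + l2 + l3 = m1 + m2 + m3 + (n1 + n2 + n3) \<and>
    l1 \<le> m1 + n1 \<and> l2 \<le> m1 + n2 \<and> l2 \<le> m2 + n1 \<and>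
    l3 \<le> m1 + n3 \<and> l3 \<le> m2 + n2 \<and> l3 \<le> m3 + n1 \<and>
    m3 + n3 \<le> l3 \<and> m3 + n2 \<le> l2 \<and> m2 + n3 \<le> l2 \<and>
    m3 + n1 \<le> l1 \<and> m2 + n2 \<le> l1 \<and> m1 + n3 \<le> l1 \<and>
    (m3 = m2 \<or> m2 = m1 \<or> n3 = n2 \<or> n2 = n1 \<or> l3 = l2 \<or> l2 = l1 \<or>
     l1 = m1 + n1 \<or> l2 = m1 + n2 \<or> l2 = m2 + n1 \<or>
     l3 = m1 + n3 \<or> l3 = m2 + n2 \<or> l3 = m3 + n1 \<or>
     m3 + n3 = l3 \<or> m3 + n2 = l2 \<or> m2 + n3 = l2 \<or>
     m3 + n1 = l1 \<or> m2 + n2 = l1 \<or> m1 + n3 = l1)"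
  supply [[smt_timeout = 300]]
  using assms unfolding alt_shift_sum_def kostka3_def by smt

lemma lr_alt_sum_eq_1_iff:
  assumes "is_part3 la" "is_part3 mu" "is_part3 nu"
  shows "lr_alt_sum la mu nu = 1 \<longleftrightarrow> on_horn3_facet la mu nu"
proof -
  obtain l1 l2 l3 m1 m2 m3 n1 n2 n3
    where la: "la = (l1, l2, l3)" and mu: "mu = (m1, m2, m3)" and nu: "nu = (n1, n2, n3)"
    by (cases la, cases mu, cases nu)
  have "lr_alt_sum la mu nu =
    alt_shift_sum (kostka3 (int m1) (int m2) (int m3)) (int n1 + 2) (int n2 + 1) (int n3)
      (int l1 + 2) (int l2 + 1) (int l3)"
    by (simp add: la mu nu lr_alt_sum_def kostka_def)
  then show ?thesis
    using kostka3_alt_sum_eq_1_iff[of "int l3" "int l2" "int l1" "int m3" "int m2" "int m1"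
        "int n3" "int n2" "int n1"] assms
    unfolding on_horn3_facet_def in_horn3_def horn3_ineqs_def la mu nu size3_def is_part3_def
    by (simp only: of_nat_add[symmetric] of_nat_le_iff of_nat_eq_iff of_nat_0_le_iff) auto
qed

theorem theorem3p1:
  fixes la mu nu :: triple
  assumes "is_part3 la" and "is_part3 mu" and "is_part3 nu"
  shows "lr_coeff la mu nu = 1 \<longleftrightarrow> on_horn3_facet la mu nu"
  using lr_coeff_eq_lr_alt_sum[OF assms] lr_alt_sum_eq_1_iff[OF assms] by simp

end
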